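(* Let $G$ be a fullerene graph that has an efficient dominating set. Then the number of vertices of $G$ is divisible by $8$.
   Context: A fullerene graph is a finite simple connected (equivalently, $3$-connected) plane cubic graph all of whose faces are pentagons or hexagons. An efficient dominating set of a graph $G$ is an independent vertex set $D$ of $G$ such that every vertex of $G$ not in $D$ is adjacent to exactly one vertex of $D$. *)

theory Defs
  imports Main
begin

definition simple_graph :: "'a set \<Rightarrow> ('a \<Rightarrow> 'a \<Rightarrow> bool) \<Rightarrow> bool" where
  "simple_graph V E \<longleftrightarrow> finite V \<and> (\<forall>u v. E u v \<longrightarrow> u \<in> V \<and> v \<in> V)
     \<and> (\<forall>u v. E u v \<longrightarrow> E v u) \<and> (\<forall>v. \<not> E v v)"

definition nbrs :: "('a \<Rightarrow> 'a \<Rightarrow> bool) \<Rightarrow> 'a \<Rightarrow> 'a set" where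
  "nbrs E v = {u. E v u}"

definition cubic :: "'a set \<Rightarrow> ('a \<Rightarrow> 'a \<Rightarrow> bool) \<Rightarrow> bool" where
  "cubic V E \<longleftrightarrow> (\<forall>v\<in>V. card (nbrs E v) = 3)"

definition connected_graph :: "'a set \<Rightarrow> ('a \<Rightarrow> 'a \<Rightarrow> bool) \<Rightarrow> bool" where
  "connected_graph V E \<longleftrightarrow> V \<noteq> {} \<and> (\<forall>u\<in>V. \<forall>v\<in>V. E\<^sup>*\<^sup>* u v)"

definition edges :: "('a \<Rightarrow> 'a \<Rightarrow> bool) \<Rightarrow> 'a set set" where
  "edges E = {{u, v} | u v. E u v}"

definition darts :: "('a \<Rightarrow> 'a \<Rightarrow> bool) \<Rightarrow> ('a \<times> 'a) set" where
  "darts E = {(u, v). E u v}"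

text \<open>A rotation system: for each vertex v, rot v is a cyclic permutation of the
  neighbours of v.  For degree 3 this means: a fixed-point-free permutation of the
  3 neighbours (which is necessarily a 3-cycle).\<close>

definition rotation_system :: "'a set \<Rightarrow> ('a \<Rightarrow> 'a \<Rightarrow> bool) \<Rightarrow> ('a \<Rightarrow> 'a \<Rightarrow> 'a) \<Rightarrow> bool" where
  "rotation_system V E rot \<longleftrightarrow> (\<forall>v\<in>V. bij_betw (rot v) (nbrs E v) (nbrs E v)
      \<and> (\<forall>u\<in>nbrs E v. rot v u \<noteq> u))"

definition face_step :: "('a \<Rightarrow> 'a \<Rightarrow> 'a) \<Rightarrow> 'a \<times> 'a \<Rightarrow> 'a \<times> 'a" where
  "face_step rot d = (snd d, rot (snd d) (fst d))"

definition face_of :: "('a \<Rightarrow> 'a \<Rightarrow> 'a) \<Rightarrow> 'a \<times> 'a \<Rightarrow> ('a \<times> 'a) set" where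
  "face_of rot d = {(face_step rot ^^ n) d | n. True}"

definition faces :: "('a \<Rightarrow> 'a \<Rightarrow> bool) \<Rightarrow> ('a \<Rightarrow> 'a \<Rightarrow> 'a) \<Rightarrow> ('a \<times> 'a) set set" where
  "faces E rot = face_of rot ` darts E"

text \<open>A plane (spherical) embedding of a connected graph is given combinatorially by a
  rotation system whose number of faces satisfies Euler's formula V - E + F = 2.
  A fullerene: connected plane cubic simple graph all of whose faces are pentagons or
  hexagons (the face boundary is a cycle of length 5 or 6).\<close>

definition fullerene :: "'a set \<Rightarrow> ('a \<Rightarrow> 'a \<Rightarrow> bool) \<Rightarrow> bool" where
  "fullerene V E \<longleftrightarrow> simple_graph V E \<and> connected_graph V E \<and> cubic V E \<and>
    (\<exists>rot. rotation_system V E rot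
       \<and> int (card V) - int (card (edges E)) + int (card (faces E rot)) = 2
       \<and> (\<forall>f\<in>faces E rot. (card f = 5 \<or> card f = 6) \<and> card (fst ` f) = card f))"

definition efficient_dominating_set :: "'a set \<Rightarrow> ('a \<Rightarrow> 'a \<Rightarrow> bool) \<Rightarrow> 'a set \<Rightarrow> bool" where
  "efficient_dominating_set V E D \<longleftrightarrow> D \<subseteq> V
     \<and> (\<forall>u\<in>D. \<forall>v\<in>D. \<not> E u v)
     \<and> (\<forall>v\<in>V - D. card {u\<in>D. E v u} = 1)"

end

theory Submission
  imports Defs
begin

(*
  An efficient dominating set D of a cubic graph partitions V into the closed
  neighbourhoods of its vertices, so |V| = 4|D| and |V - D| = 3|D|; it remains to
  show that |V - D| is even.

  Assign to each x outside D the dart (x, y) where y follows the D-neighbour of x in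
  the rotation at x. These darts are paired off by a fixed-point-free involution. If
  the next vertex on the face of (x, y) lies outside D, then (y, x) is again such a
  dart. Otherwise that vertex d lies in D, and two further face steps run along the
  dart assigned to a neighbour x' of d. A pentagon would then have to re-enter x from
  a vertex outside D, whereas the face predecessor of (x, y) is the D-neighbour of x;
  so the face is a hexagon, and three face steps swap the two darts.
*)

lemma even_card_if_fixpoint_free_involution:
  assumes "finite A"
    and "\<And>a. a \<in> A \<Longrightarrow> g a \<in> A"
    and "\<And>a. a \<in> A \<Longrightarrow> g (g a) = a"
    and "\<And>a. a \<in> A \<Longrightarrow> g a \<noteq> a"
  shows "even (card A)"
  using assms
proof (induction A rule: finite_psubset_induct)
  case (psubset A)
  show ?case
  proof (cases "A = {}")
    case False
    then obtain a where a: "a \<in> A" by blast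
    define B where "B = A - {a, g a}"
    have "g a \<in> A" "g a \<noteq> a"
      using a psubset.prems by auto
    then have pair: "{a, g a} \<subseteq> A" "card {a, g a} = 2"
      using a by auto
    have "B \<subset> A" unfolding B_def using a by blast
    have "g b \<in> B" if "b \<in> B" for b
    proof -
      from that have b: "b \<in> A" "b \<noteq> a" "b \<noteq> g a" by (auto simp: B_def)
      then have "g b \<noteq> a" "g b \<noteq> g a"
        using a psubset.prems(2) by metis+
      with b show ?thesis using psubset.prems(1) by (auto simp: B_def)
    qed
    then have "even (card B)"
      using \<open>B \<subset> A\<close> by (intro psubset.IH) (use psubset.prems in \<open>auto simp: B_def\<close>)
    moreover have "card A = card B + 2"
      unfolding B_def using pair psubset.hyps card_mono[OF psubset.hyps pair(1)]
      by (simp add: card_Diff_subset)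
    ultimately show ?thesis by simp
  qed simp
qed

lemma card_3_derangement_eq_iff:
  assumes "bij_betw r S S" "card S = 3" "\<And>u. u \<in> S \<Longrightarrow> r u \<noteq> u"
    and "a \<in> S" "b \<in> S" "a \<noteq> b"
  shows "r a = b \<longleftrightarrow> r b \<noteq> a"
proof -
  obtain c where S: "S = {a, b, c}" and c: "c \<noteq> a" "c \<noteq> b"
  proof -
    have "card {a, b} < card S"
      using \<open>card S = 3\<close> \<open>a \<noteq> b\<close> by simp
    then have "\<not> S \<subseteq> {a, b}"
      using card_mono[of "{a, b}" S] by auto
    then obtain c where c: "c \<in> S" "c \<noteq> a" "c \<noteq> b" by blast
    moreover have "finite S"
      using \<open>card S = 3\<close> by (metis card.infinite zero_neq_numeral)
    ultimately have "{a, b, c} = S"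
      using assms by (intro card_subset_eq) auto
    with c that show ?thesis by blast
  qed
  have "inj_on r S" "\<And>u. u \<in> S \<Longrightarrow> r u \<in> S"
    using assms(1) by (auto simp: bij_betw_def)
  then show ?thesis
    using assms(3,6) c unfolding S inj_on_def by auto
qed

lemma card_funpow_orbit_le_period:
  assumes "(f ^^ p) x = x" "0 < p"
  shows "card {(f ^^ n) x | n. True} \<le> p"
proof -
  have "{(f ^^ n) x | n. True} \<subseteq> (\<lambda>n. (f ^^ n) x) ` {..<p}"
    using funpow_mod_eq[where f = f and n = p and x = x] assms
    by (auto intro!: image_eqI[where x = "_ mod p"])
  then have "card {(f ^^ n) x | n. True} \<le> card ((\<lambda>n. (f ^^ n) x) ` {..<p})"
    by (intro card_mono) auto
  also have "\<dots> \<le> p"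
    using card_image_le[of "{..<p}"] by simp
  finally show ?thesis .
qed

lemma inj_on_funpow:
  assumes "inj_on f A" "f ` A \<subseteq> A"
  shows "inj_on (f ^^ n) A"
proof (induction n)
  case (Suc n)
  then have "inj_on (f ^^ n \<circ> f) A"
    using assms by (intro comp_inj_on) (auto intro: inj_on_subset)
  then show ?case by (simp only: funpow_Suc_right)
qed simp

lemma funpow_card_orbit_eq_self:
  fixes f :: "'a \<Rightarrow> 'a" and x :: 'a
  defines "Orb \<equiv> {(f ^^ n) x | n. True}"
  assumes "finite Orb" "inj_on f Orb"
  shows "(f ^^ card Orb) x = x"
proof -
  have "(\<lambda>n. (f ^^ n) x) ` {..card Orb} \<subseteq> Orb"
    unfolding Orb_def by blast
  then have "card ((\<lambda>n. (f ^^ n) x) ` {..card Orb}) < card {..card Orb}"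
    using card_mono[OF \<open>finite Orb\<close>] by (simp add: le_imp_less_Suc)
  then obtain m n where mn: "m \<le> card Orb" "n \<le> card Orb" "m \<noteq> n" "(f ^^ m) x = (f ^^ n) x"
    using pigeonhole unfolding inj_on_def by blast
  then obtain i j where ij: "i < j" "j \<le> card Orb" "(f ^^ i) x = (f ^^ j) x"
    by (cases "m < n") (fastforce, metis linorder_neqE_nat)
  have "(f ^^ i) ((f ^^ (j - i)) x) = (f ^^ (i + (j - i))) x"
    by (simp add: funpow_add)
  with ij have "(f ^^ i) x = (f ^^ i) ((f ^^ (j - i)) x)"
    by simp
  moreover have "f ` Orb \<subseteq> Orb"
    unfolding Orb_def by (auto, metis comp_apply funpow.simps(2))
  moreover have "(f ^^ k) x \<in> Orb" for k
    unfolding Orb_def by blast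
  moreover from this[of 0] have "x \<in> Orb"
    by simp
  ultimately have period: "(f ^^ (j - i)) x = x"
    using inj_onD[OF inj_on_funpow[OF \<open>inj_on f Orb\<close>], of i] by metis
  then have "card Orb \<le> j - i"
    unfolding Orb_def using \<open>i < j\<close> by (intro card_funpow_orbit_le_period) simp_all
  with ij have "j - i = card Orb" by linarith
  with period show ?thesis by simp
qed

locale efficiently_dominated_cubic_graph =
  fixes V :: "'a set" and E :: "'a \<Rightarrow> 'a \<Rightarrow> bool" and D :: "'a set"
  assumes simple: "simple_graph V E"
    and cubic: "cubic V E"
    and efficient: "efficient_dominating_set V E D"
begin

lemma finite_V: "finite V"
  using simple by (simp add: simple_graph_def)

lemma adj_in_V: "E u v \<Longrightarrow> u \<in> V \<and> v \<in> V"
  using simple by (simp add: simple_graph_def)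

lemma adj_sym: "E u v \<Longrightarrow> E v u"
  using simple by (simp add: simple_graph_def)

lemma not_adj_self: "\<not> E v v"
  using simple by (simp add: simple_graph_def)

lemma card_nbrs: "v \<in> V \<Longrightarrow> card (nbrs E v) = 3"
  using cubic by (simp add: cubic_def)

lemma D_subset_V: "D \<subseteq> V"
  using efficient by (simp add: efficient_dominating_set_def)

lemma not_adj_D: "u \<in> D \<Longrightarrow> v \<in> D \<Longrightarrow> \<not> E u v"
  using efficient by (simp add: efficient_dominating_set_def)

lemma ex1_adj_D:
  assumes "x \<in> V - D"
  shows "\<exists>!d. d \<in> D \<and> E x d"
proof -
  have "card {d \<in> D. E x d} = 1"
    using efficient assms by (simp add: efficient_dominating_set_def)
  then obtain d where "{d \<in> D. E x d} = {d}"
    by (rule card_1_singletonE)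
  then have "\<forall>u. u \<in> D \<and> E x u \<longleftrightarrow> u = d"
    by (simp add: set_eq_iff)
  then show ?thesis
    by (intro ex1I[of _ d]) simp_all
qed

definition dominator :: "'a \<Rightarrow> 'a" where
  "dominator x = (THE d. d \<in> D \<and> E x d)"

lemma dominator_in_D_adj: "x \<in> V - D \<Longrightarrow> dominator x \<in> D \<and> E x (dominator x)"
  unfolding dominator_def by (rule theI') (rule ex1_adj_D)

lemma dominator_eqI: "x \<in> V - D \<Longrightarrow> d \<in> D \<Longrightarrow> E x d \<Longrightarrow> dominator x = d"
  using dominator_in_D_adj[of x] ex1_adj_D[of x] by blast

lemma adj_D_dominator: "d \<in> D \<Longrightarrow> E d x \<Longrightarrow> x \<in> V - D \<and> dominator x = d"
  using adj_in_V adj_sym not_adj_D dominator_eqI by blast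

lemma card_V_minus_D: "card (V - D) = 3 * card D"
proof -
  have finite_D: "finite D"
    using finite_V D_subset_V by (rule finite_subset[rotated])
  have "V - D = (\<Union>d\<in>D. nbrs E d)"
  proof
    show "V - D \<subseteq> (\<Union>d\<in>D. nbrs E d)"
    proof
      fix x
      assume "x \<in> V - D"
      then have "dominator x \<in> D" "E (dominator x) x"
        using dominator_in_D_adj adj_sym by blast+
      then show "x \<in> (\<Union>d\<in>D. nbrs E d)"
        by (auto simp: nbrs_def)
    qed
    show "(\<Union>d\<in>D. nbrs E d) \<subseteq> V - D"
      using adj_D_dominator by (auto simp: nbrs_def)
  qed
  also have "card \<dots> = (\<Sum>d\<in>D. card (nbrs E d))"
  proof (rule card_UN_disjoint[OF finite_D])
    show "\<forall>d\<in>D. finite (nbrs E d)"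
      using D_subset_V card_nbrs by (metis card.infinite subsetD zero_neq_numeral)
    show "\<forall>d\<in>D. \<forall>d'\<in>D. d \<noteq> d' \<longrightarrow> nbrs E d \<inter> nbrs E d' = {}"
      using adj_D_dominator by (auto simp: nbrs_def)
  qed
  also have "\<dots> = (\<Sum>d\<in>D. 3)"
    using D_subset_V card_nbrs by (intro sum.cong) auto
  also have "\<dots> = 3 * card D"
    by simp
  finally show ?thesis .
qed

lemma card_V: "card V = 4 * card D"
proof -
  have "finite D"
    using finite_V D_subset_V by (rule rev_finite_subset)
  then have "card V = card D + card (V - D)"
    using D_subset_V card_mono[OF finite_V D_subset_V] by (simp add: card_Diff_subset)
  then show ?thesis
    using card_V_minus_D by simp
qed

end

locale efficiently_dominated_cubic_map = efficiently_dominated_cubic_graph +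
  fixes rot :: "'a \<Rightarrow> 'a \<Rightarrow> 'a"
  assumes rotation: "rotation_system V E rot"
begin

lemma rot_bij: "E v u \<Longrightarrow> bij_betw (rot v) (nbrs E v) (nbrs E v)"
  using rotation adj_in_V by (simp add: rotation_system_def)

lemma adj_rot: "E v u \<Longrightarrow> E v (rot v u)"
  using rot_bij by (fastforce simp: nbrs_def dest: bij_betwE)

lemma rot_inj: "E v u \<Longrightarrow> E v u' \<Longrightarrow> rot v u = rot v u' \<Longrightarrow> u = u'"
  using rot_bij by (fastforce simp: nbrs_def dest: bij_betw_imp_inj_on inj_onD)

lemma rot_neq: "E v u \<Longrightarrow> rot v u \<noteq> u"
  using rotation adj_in_V by (simp add: rotation_system_def nbrs_def)

lemma rot_eq_iff: "E v a \<Longrightarrow> E v b \<Longrightarrow> a \<noteq> b \<Longrightarrow> rot v a = b \<longleftrightarrow> rot v b \<noteq> a"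
  by (rule card_3_derangement_eq_iff[OF rot_bij card_nbrs])
    (auto simp: nbrs_def adj_in_V rot_neq)

lemma face_step_in_darts: "d \<in> darts E \<Longrightarrow> face_step rot d \<in> darts E"
  by (auto simp: darts_def face_step_def adj_sym adj_rot)

lemma funpow_face_step_in_darts: "d \<in> darts E \<Longrightarrow> (face_step rot ^^ n) d \<in> darts E"
  by (induction n) (simp_all add: face_step_in_darts)

lemma inj_on_face_step: "inj_on (face_step rot) (darts E)"
  by (auto intro!: inj_onI simp: darts_def face_step_def) (meson adj_sym rot_inj)

lemma funpow_face_step_card_face_of:
  assumes "d \<in> darts E"
  shows "(face_step rot ^^ card (face_of rot d)) d = d"
proof -
  from assms have "face_of rot d \<subseteq> darts E"
    by (auto simp: face_of_def funpow_face_step_in_darts)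
  moreover have "finite (darts E)"
    using finite_V by (auto simp: darts_def dest: adj_in_V intro: finite_subset[of _ "V \<times> V"])
  ultimately show ?thesis
    unfolding face_of_def
    by (intro funpow_card_orbit_eq_self) (auto intro: finite_subset inj_on_subset[OF inj_on_face_step])
qed

definition dom_succ_darts :: "('a \<times> 'a) set" where
  "dom_succ_darts = (\<lambda>x. (x, rot x (dominator x))) ` (V - D)"

lemma dom_succ_dartsI: "x \<in> V - D \<Longrightarrow> (x, rot x (dominator x)) \<in> dom_succ_darts"
  by (simp add: dom_succ_darts_def)

lemma dom_succ_dartsD:
  assumes "(x, y) \<in> dom_succ_darts"
  shows "x \<in> V - D" "y \<in> V - D" "E x y" "rot x (dominator x) = y"
proof -
  show x: "x \<in> V - D" and y: "rot x (dominator x) = y"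
    using assms by (auto simp: dom_succ_darts_def)
  have "dominator x \<in> D" "E x (dominator x)"
    using dominator_in_D_adj[OF x] by blast+
  then show "E x y"
    using y adj_rot by blast
  moreover have "y \<notin> D"
    using \<open>E x y\<close> \<open>E x (dominator x)\<close> dominator_eqI[OF x] rot_neq y by metis
  ultimately show "y \<in> V - D"
    using adj_in_V by blast
qed

lemma finite_dom_succ_darts: "finite dom_succ_darts"
  using finite_V by (simp add: dom_succ_darts_def)

lemma card_dom_succ_darts: "card dom_succ_darts = card (V - D)"
  unfolding dom_succ_darts_def by (rule card_image) (auto intro: inj_onI)

lemma face_step_eq_dom_succ_dart:
  assumes "(x, y) \<in> dom_succ_darts" "d \<in> darts E" "face_step rot d = (x, y)"
  shows "d = (dominator x, x)"
proof -
  obtain u where d: "d = (u, x)" and "rot x u = y"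
    using assms(3) by (cases d) (simp add: face_step_def)
  moreover have "E x u"
    using assms(2) d adj_sym by (simp add: darts_def)
  moreover have "x \<in> V - D"
    using dom_succ_dartsD(1)[OF assms(1)] .
  ultimately show ?thesis
    using dominator_in_D_adj rot_inj dom_succ_dartsD(4)[OF assms(1)] by metis
qed

lemma dom_succ_dart_reverse:
  assumes "(x, y) \<in> dom_succ_darts" "rot y x \<notin> D"
  shows "(y, x) \<in> dom_succ_darts" "rot x y \<notin> D"
proof -
  note xy = dom_succ_dartsD[OF assms(1)]
  have dom_y: "dominator y \<in> D" "E y (dominator y)"
    using dominator_in_D_adj[OF xy(2)] by blast+
  have "dominator y \<noteq> x"
    using dom_y(1) xy(1) by blast
  then have "rot y (dominator y) = x"
    using rot_eq_iff[OF dom_y(2) adj_sym[OF xy(3)]] dom_y(1) assms(2) by auto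
  then show "(y, x) \<in> dom_succ_darts"
    using dom_succ_dartsI[OF xy(2)] by simp
  have dom_x: "dominator x \<in> D" "E x (dominator x)"
    using dominator_in_D_adj[OF xy(1)] by blast+
  have "dominator x \<noteq> y"
    using dom_x(1) xy(2) by blast
  then have "rot x y \<noteq> dominator x"
    using rot_eq_iff[OF dom_x(2) xy(3)] xy(4) by blast
  then show "rot x y \<notin> D"
    using dominator_eqI[OF xy(1)] adj_rot[OF xy(3)] by metis
qed

lemma funpow3_face_step:
  "(face_step rot ^^ 3) (x, y) = (rot (rot y x) y, rot (rot (rot y x) y) (rot y x))"
  by (simp add: numeral_3_eq_3 face_step_def)

lemma funpow3_face_step_in_dom_succ_darts:
  assumes "(x, y) \<in> dom_succ_darts" "rot y x \<in> D"
  shows "(face_step rot ^^ 3) (x, y) \<in> dom_succ_darts"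
proof -
  define d x' where "d = rot y x" and "x' = rot d y"
  have "E y d"
    unfolding d_def using dom_succ_dartsD(3)[OF assms(1)] adj_sym adj_rot by blast
  then have "E d x'"
    unfolding x'_def using adj_sym adj_rot by blast
  then have "x' \<in> V - D" "dominator x' = d"
    using adj_D_dominator assms(2) d_def by auto
  then show ?thesis
    using dom_succ_dartsI[of x'] by (simp add: funpow3_face_step flip: d_def x'_def)
qed

lemma card_face_of_dom_succ_dart_neq_5:
  assumes "(x, y) \<in> dom_succ_darts" "rot y x \<in> D"
  shows "card (face_of rot (x, y)) \<noteq> 5"
proof
  let ?F = "face_step rot"
  assume five: "card (face_of rot (x, y)) = 5"
  have dart: "(x, y) \<in> darts E"
    using dom_succ_dartsD(3)[OF assms(1)] by (simp add: darts_def)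
  obtain x' y' where xy': "(?F ^^ 3) (x, y) = (x', y')"
    by (cases "(?F ^^ 3) (x, y)")
  have "?F ((?F ^^ 4) (x, y)) = (x, y)"
    using funpow_face_step_card_face_of[OF dart] five by (simp add: eval_nat_numeral)
  then have "(?F ^^ 4) (x, y) = (dominator x, x)"
    using face_step_eq_dom_succ_dart[OF assms(1) funpow_face_step_in_darts[OF dart]] by blast
  moreover have "(?F ^^ 4) (x, y) = ?F (x', y')"
    using xy' by (simp add: eval_nat_numeral)
  ultimately have "y' = dominator x"
    by (simp add: face_step_def)
  moreover have "y' \<notin> D"
    using funpow3_face_step_in_dom_succ_darts[OF assms] xy' dom_succ_dartsD(2) by auto
  ultimately show False
    using dominator_in_D_adj dom_succ_dartsD(1)[OF assms(1)] by blast
qed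

lemma funpow3_face_step_hexagon:
  assumes "(x, y) \<in> dom_succ_darts" "rot y x \<in> D" "card (face_of rot (x, y)) = 6"
  obtains x' y' where "(face_step rot ^^ 3) (x, y) = (x', y')" "rot y' x' \<in> D"
    "(face_step rot ^^ 3) (x', y') = (x, y)" "(x', y') \<noteq> (x, y)"
proof -
  let ?F = "face_step rot"
  have dart: "(x, y) \<in> darts E"
    using dom_succ_dartsD(3)[OF assms(1)] by (simp add: darts_def)
  obtain x' y' where xy': "(?F ^^ 3) (x, y) = (x', y')"
    by (cases "(?F ^^ 3) (x, y)")
  have six: "(?F ^^ 6) (x, y) = (x, y)"
    using funpow_face_step_card_face_of[OF dart] assms(3) by simp
  then have "?F ((?F ^^ 5) (x, y)) = (x, y)"
    by (simp add: eval_nat_numeral)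
  then have "(?F ^^ 5) (x, y) = (dominator x, x)"
    using face_step_eq_dom_succ_dart[OF assms(1) funpow_face_step_in_darts[OF dart]] by blast
  moreover have "(?F ^^ 5) (x, y) = ?F (?F (x', y'))"
    using xy' by (simp add: eval_nat_numeral)
  ultimately have "rot y' x' = dominator x"
    by (simp add: face_step_def)
  then have "rot y' x' \<in> D"
    using dominator_in_D_adj dom_succ_dartsD(1)[OF assms(1)] by simp
  moreover have "(?F ^^ 3) (x', y') = (x, y)"
    using six xy' by (simp add: eval_nat_numeral)
  moreover have "(x', y') \<noteq> (x, y)"
  proof
    assume "(x', y') = (x, y)"
    then have "card (face_of rot (x, y)) \<le> 3"
      unfolding face_of_def using xy' by (intro card_funpow_orbit_le_period) simp_all
    with assms(3) show False by simp
  qed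
  ultimately show ?thesis
    using xy' that by blast
qed

lemma even_card_dom_succ_darts_not_into_D:
  "even (card {(x, y) \<in> dom_succ_darts. rot y x \<notin> D})" (is "even (card ?P)")
proof (rule even_card_if_fixpoint_free_involution[where g = prod.swap])
  show "finite ?P"
    using finite_dom_succ_darts by (rule rev_finite_subset) auto
  fix d
  assume "d \<in> ?P"
  then obtain x y where d: "d = (x, y)" and xy: "(x, y) \<in> dom_succ_darts" "rot y x \<notin> D"
    by (cases d) auto
  have "x \<noteq> y"
    using dom_succ_dartsD(3)[OF xy(1)] not_adj_self by blast
  then show "prod.swap d \<in> ?P" "prod.swap (prod.swap d) = d" "prod.swap d \<noteq> d"
    using dom_succ_dart_reverse[OF xy] d by simp_all
qed

lemma even_card_dom_succ_darts_into_D: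
  assumes faces: "\<And>d. d \<in> darts E \<Longrightarrow> card (face_of rot d) \<in> {5, 6}"
  shows "even (card {(x, y) \<in> dom_succ_darts. rot y x \<in> D})" (is "even (card ?P)")
proof -
  let ?F3 = "face_step rot ^^ 3"
  have "?F3 d \<in> ?P \<and> ?F3 (?F3 d) = d \<and> ?F3 d \<noteq> d" if "d \<in> ?P" for d
  proof -
    obtain x y where d: "d = (x, y)" and xy: "(x, y) \<in> dom_succ_darts" "rot y x \<in> D"
      using \<open>d \<in> ?P\<close> by (cases d) auto
    then have "card (face_of rot (x, y)) = 6"
      using faces[of "(x, y)"] card_face_of_dom_succ_dart_neq_5 dom_succ_dartsD(3)
      by (auto simp: darts_def)
    then obtain x' y' where "?F3 (x, y) = (x', y')" "rot y' x' \<in> D"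
      "?F3 (x', y') = (x, y)" "(x', y') \<noteq> (x, y)"
      using funpow3_face_step_hexagon[OF xy] by blast
    moreover have "?F3 (x, y) \<in> dom_succ_darts"
      using funpow3_face_step_in_dom_succ_darts[OF xy] .
    ultimately show ?thesis
      using d by simp
  qed
  moreover have "finite ?P"
    using finite_dom_succ_darts by (rule rev_finite_subset) auto
  ultimately show ?thesis
    by (intro even_card_if_fixpoint_free_involution[where g = ?F3]) simp_all
qed

lemma even_card_V_minus_D:
  assumes "\<And>d. d \<in> darts E \<Longrightarrow> card (face_of rot d) \<in> {5, 6}"
  shows "even (card (V - D))"
proof -
  let ?P1 = "{(x, y) \<in> dom_succ_darts. rot y x \<in> D}"
  let ?P2 = "{(x, y) \<in> dom_succ_darts. rot y x \<notin> D}"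
  have "finite ?P1" "finite ?P2"
    using finite_dom_succ_darts by (rule rev_finite_subset, auto)+
  then have "card (?P1 \<union> ?P2) = card ?P1 + card ?P2"
    by (rule card_Un_disjoint) auto
  moreover have "?P1 \<union> ?P2 = dom_succ_darts"
    by auto
  ultimately have "card (V - D) = card ?P1 + card ?P2"
    using card_dom_succ_darts by simp
  then show ?thesis
    using even_card_dom_succ_darts_into_D[OF assms] even_card_dom_succ_darts_not_into_D by simp
qed

end

theorem mainTheorem2:
  fixes V :: "'a set" and E :: "'a \<Rightarrow> 'a \<Rightarrow> bool" and D :: "'a set"
  assumes "fullerene V E"
    and "efficient_dominating_set V E D"
  shows "8 dvd card V"
proof -
  obtain rot where rot: "rotation_system V E rot"
    and faces: "\<forall>f\<in>faces E rot. (card f = 5 \<or> card f = 6) \<and> card (fst ` f) = card f"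
    using assms(1) unfolding fullerene_def by blast
  interpret efficiently_dominated_cubic_map V E D rot
    using assms rot by unfold_locales (simp_all add: fullerene_def)
  have "even (card (V - D))"
    using faces by (intro even_card_V_minus_D) (auto simp: faces_def)
  then have "even (card D)"
    by (simp add: card_V_minus_D)
  then obtain k where "card D = 2 * k" ..
  then show ?thesis
    by (simp add: card_V)
qed

end
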